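(* Let $K\times X\to X$, $(k,x)\mapsto kx$, be a continuous action of a compact group $K$ on a locally compact space $X$, let $\mu\neq0$ be a $K$-invariant positive Radon measure on $X$, and let $\pi\colon K\to U(L^2(X,\mu))$ be given by $(\pi(k)f)(x)=f(k^{-1}x)$. If $\pi$ is a factor representation, then $kx=x$ for every $k\in K$ and every $x\in\operatorname{supp}\mu$.
   Context: A unitary representation $\pi$ is a factor representation if the von Neumann algebra $\pi(K)''$ has trivial center. $\operatorname{supp}\mu$ is the support of $\mu$. *)

theory Defs
  imports "HOL-Analysis.Analysis" "HOL-Algebra.Group"
begin

definition topological_group :: "('k, 'm) monoid_scheme \<Rightarrow> 'k topology \<Rightarrow> bool" where
  "topological_group G T \<longleftrightarrow> group G \<and> topspace T = carrier G \<and>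
     continuous_map (prod_topology T T) T (\<lambda>p. fst p \<otimes>\<^bsub>G\<^esub> snd p) \<and>
     continuous_map T T (\<lambda>k. inv\<^bsub>G\<^esub> k)"

definition continuous_action ::
  "('k, 'm) monoid_scheme \<Rightarrow> 'k topology \<Rightarrow> ('k \<Rightarrow> 'x::topological_space \<Rightarrow> 'x) \<Rightarrow> bool" where
  "continuous_action G T a \<longleftrightarrow>
     continuous_map (prod_topology T euclidean) euclidean (\<lambda>p. a (fst p) (snd p)) \<and>
     (\<forall>x. a \<one>\<^bsub>G\<^esub> x = x) \<and>
     (\<forall>g\<in>carrier G. \<forall>h\<in>carrier G. \<forall>x. a (g \<otimes>\<^bsub>G\<^esub> h) x = a g (a h x))"

definition radon_measure :: "'x::topological_space measure \<Rightarrow> bool" where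
  "radon_measure M \<longleftrightarrow> sets M = sets borel \<and>
     (\<forall>C. compact C \<longrightarrow> emeasure M C < \<infinity>) \<and>
     (\<forall>A\<in>sets borel. emeasure M A = (INF U\<in>{U. open U \<and> A \<subseteq> U}. emeasure M U)) \<and>
     (\<forall>U. open U \<longrightarrow> emeasure M U = (SUP C\<in>{C. compact C \<and> C \<subseteq> U}. emeasure M C))"

definition msupp :: "'x::topological_space measure \<Rightarrow> 'x set" where
  "msupp M = UNIV - \<Union>{U. open U \<and> emeasure M U = 0}"

definition invariant_measure ::
  "('k, 'm) monoid_scheme \<Rightarrow> ('k \<Rightarrow> 'x \<Rightarrow> 'x) \<Rightarrow> 'x measure \<Rightarrow> bool" where
  "invariant_measure G a M \<longleftrightarrow>
     (\<forall>k\<in>carrier G. a k \<in> M \<rightarrow>\<^sub>M M \<and> distr M M (a k) = M)"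

text \<open>L^2(X,mu): square-integrable complex functions (elements of L^2 are their
 classes modulo equality almost everywhere).\<close>
definition L2 :: "'x measure \<Rightarrow> ('x \<Rightarrow> complex) set" where
  "L2 M = {f. f \<in> borel_measurable M \<and> integrable M (\<lambda>x. (cmod (f x))\<^sup>2)}"

definition L2_norm :: "'x measure \<Rightarrow> ('x \<Rightarrow> complex) \<Rightarrow> real" where
  "L2_norm M f = sqrt (LINT x|M. (cmod (f x))\<^sup>2)"

text \<open>Bounded linear operators on L^2, represented on representatives; they must
 respect equality a.e.\<close>
definition bounded_op :: "'x measure \<Rightarrow> (('x \<Rightarrow> complex) \<Rightarrow> ('x \<Rightarrow> complex)) \<Rightarrow> bool" where
  "bounded_op M T \<longleftrightarrow>
     (\<forall>f\<in>L2 M. T f \<in> L2 M) \<and>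
     (\<forall>f\<in>L2 M. \<forall>g\<in>L2 M. (AE x in M. f x = g x) \<longrightarrow> (AE x in M. T f x = T g x)) \<and>
     (\<forall>f\<in>L2 M. \<forall>g\<in>L2 M. \<forall>c d. AE x in M. T (\<lambda>y. c * f y + d * g y) x = c * T f x + d * T g x) \<and>
     (\<exists>C. \<forall>f\<in>L2 M. L2_norm M (T f) \<le> C * L2_norm M f)"

definition op_eq :: "'x measure \<Rightarrow> (('x \<Rightarrow> complex) \<Rightarrow> ('x \<Rightarrow> complex)) \<Rightarrow>
    (('x \<Rightarrow> complex) \<Rightarrow> ('x \<Rightarrow> complex)) \<Rightarrow> bool" where
  "op_eq M S T \<longleftrightarrow> (\<forall>f\<in>L2 M. AE x in M. S f x = T f x)"

definition commutant :: "'x measure \<Rightarrow> (('x \<Rightarrow> complex) \<Rightarrow> ('x \<Rightarrow> complex)) set \<Rightarrow>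
    (('x \<Rightarrow> complex) \<Rightarrow> ('x \<Rightarrow> complex)) set" where
  "commutant M S = {T. bounded_op M T \<and> (\<forall>R\<in>S. op_eq M (T \<circ> R) (R \<circ> T))}"

text \<open>A set of operators generates a von Neumann algebra S'' with trivial center
 S'' \<inter> S''' (every central element is a scalar multiple of the identity).\<close>
definition factor_set :: "'x measure \<Rightarrow> (('x \<Rightarrow> complex) \<Rightarrow> ('x \<Rightarrow> complex)) set \<Rightarrow> bool" where
  "factor_set M S \<longleftrightarrow>
     (\<forall>T \<in> commutant M (commutant M S) \<inter> commutant M (commutant M (commutant M S)).
        \<exists>c::complex. op_eq M T (\<lambda>f x. c * f x))"

definition quasi_regular :: "('k, 'm) monoid_scheme \<Rightarrow> ('k \<Rightarrow> 'x \<Rightarrow> 'x) \<Rightarrow> 'k \<Rightarrow>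
    ('x \<Rightarrow> complex) \<Rightarrow> ('x \<Rightarrow> complex)" where
  "quasi_regular G a k f = (\<lambda>x. f (a (inv\<^bsub>G\<^esub> k) x))"

definition factor_representation ::
  "('k, 'm) monoid_scheme \<Rightarrow> 'x measure \<Rightarrow> ('k \<Rightarrow> ('x \<Rightarrow> complex) \<Rightarrow> ('x \<Rightarrow> complex)) \<Rightarrow> bool" where
  "factor_representation G M \<pi> \<longleftrightarrow> factor_set M (\<pi> ` carrier G)"

end

theory Submission
  imports Defs
begin

text \<open>Let \<open>P\<close> map \<open>g\<close> to \<open>g\<close> minus its best \<open>L\<^sup>2\<close>-approximation by the closed span of the
  vectors \<open>f - \<pi>(k) f\<close>; this is the orthogonal projection onto the \<open>\<pi>\<close>-invariant vectors.
  As each \<open>\<pi>(k)\<close> is unitary, \<open>P\<close> commutes with \<open>\<pi>(K)\<close>, and every operator commuting with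
  \<open>\<pi>(K)\<close> preserves both the invariant vectors and that closed span, hence commutes with \<open>P\<close>.
  So \<open>P\<close> is central in \<open>\<pi>(K)''\<close>, and for a factor representation it is a scalar: either
  every square-integrable function is invariant or only the null ones are.
  In the first case, if \<open>k\<close> moved a point \<open>x\<close> of the support, a neighbourhood \<open>U\<close> of \<open>x\<close>
  of finite measure with \<open>k U \<inter> U = {}\<close> would have a non-invariant indicator.
  In the second case, the saturation \<open>K N\<close> of a compact neighbourhood \<open>N\<close> of a support point
  is a compact \<open>K\<close>-stable set of positive finite measure, whose indicator is a nonzero invariant
  vector; so the support is empty.\<close>

section \<open>Square-integrable functions\<close>

definition L2_sqnorm :: "'x measure \<Rightarrow> ('x \<Rightarrow> complex) \<Rightarrow> real" where
  "L2_sqnorm M f = (LINT x|M. (cmod (f x))\<^sup>2)"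

definition L2_inner :: "'x measure \<Rightarrow> ('x \<Rightarrow> complex) \<Rightarrow> ('x \<Rightarrow> complex) \<Rightarrow> complex" where
  "L2_inner M f g = (LINT x|M. f x * cnj (g x))"

lemma borel_measurable_cnj [measurable]:
  "f \<in> borel_measurable M \<Longrightarrow> (\<lambda>x. cnj (f x)) \<in> borel_measurable M"
  by (rule borel_measurable_continuous_on[where f = cnj]) (auto intro: continuous_intros)

lemma L2_measurable: "f \<in> L2 M \<Longrightarrow> f \<in> borel_measurable M"
  by (simp add: L2_def)

lemma L2_integrable: "f \<in> L2 M \<Longrightarrow> integrable M (\<lambda>x. (cmod (f x))\<^sup>2)"
  by (simp add: L2_def)

lemma L2_lincomb:
  assumes "f \<in> L2 M" "g \<in> L2 M"
  shows "(\<lambda>x. c * f x + d * g x) \<in> L2 M"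
proof -
  have [measurable]: "f \<in> borel_measurable M" "g \<in> borel_measurable M"
    using assms by (simp_all add: L2_measurable)
  have bound: "(cmod (c * u + d * v))\<^sup>2 \<le> 2 * ((cmod c)\<^sup>2 * (cmod u)\<^sup>2) + 2 * ((cmod d)\<^sup>2 * (cmod v)\<^sup>2)"
    for u v
  proof -
    have "cmod (c * u + d * v) \<le> cmod c * cmod u + cmod d * cmod v"
      by (metis norm_mult norm_triangle_ineq)
    then have "(cmod (c * u + d * v))\<^sup>2 \<le> (cmod c * cmod u + cmod d * cmod v)\<^sup>2"
      by (simp add: power_mono)
    also have "\<dots> \<le> 2 * (cmod c * cmod u)\<^sup>2 + 2 * (cmod d * cmod v)\<^sup>2"
      using zero_le_power2[of "cmod c * cmod u - cmod d * cmod v"]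
      by (simp add: power2_diff power2_sum)
    finally show ?thesis
      by (simp add: power_mult_distrib)
  qed
  have "integrable M (\<lambda>x. 2 * ((cmod c)\<^sup>2 * (cmod (f x))\<^sup>2) + 2 * ((cmod d)\<^sup>2 * (cmod (g x))\<^sup>2))"
    using assms by (simp add: L2_integrable)
  then have "integrable M (\<lambda>x. (cmod (c * f x + d * g x))\<^sup>2)"
    by (rule Bochner_Integration.integrable_bound) (auto intro!: AE_I2 order.trans[OF _ abs_ge_self] bound)
  then show ?thesis
    by (simp add: L2_def)
qed

lemma L2_add: "f \<in> L2 M \<Longrightarrow> g \<in> L2 M \<Longrightarrow> (\<lambda>x. f x + g x) \<in> L2 M"
  using L2_lincomb[of f M g 1 1] by simp

lemma L2_diff: "f \<in> L2 M \<Longrightarrow> g \<in> L2 M \<Longrightarrow> (\<lambda>x. f x - g x) \<in> L2 M"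
  using L2_lincomb[of f M g 1 "-1"] by simp

lemma L2_scale: "f \<in> L2 M \<Longrightarrow> (\<lambda>x. c * f x) \<in> L2 M"
  using L2_lincomb[of f M f c 0] by simp

lemma L2_zero: "(\<lambda>x. 0) \<in> L2 M"
  by (simp add: L2_def)

lemma L2_indicator:
  assumes "A \<in> sets M" "emeasure M A < \<infinity>"
  shows "(\<lambda>x. indicator A x :: complex) \<in> L2 M"
proof -
  have "(\<lambda>x. (cmod (indicator A x :: complex))\<^sup>2) = (indicator A :: _ \<Rightarrow> real)"
    by (auto simp: indicator_def)
  moreover have "integrable M (indicator A :: _ \<Rightarrow> real)"
    using assms by (simp add: integrable_indicator_iff)
  ultimately show ?thesis
    using assms(1) by (simp add: L2_def)
qed

lemma L2_inner_integrable:
  assumes "f \<in> L2 M" "g \<in> L2 M"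
  shows "integrable M (\<lambda>x. f x * cnj (g x))"
proof -
  have [measurable]: "f \<in> borel_measurable M" "g \<in> borel_measurable M"
    using assms by (simp_all add: L2_measurable)
  have "u * v \<le> u\<^sup>2 + v\<^sup>2" if "0 \<le> u" "0 \<le> v" for u v :: real
    using sum_squares_bound[of u v] mult_nonneg_nonneg[OF that] by linarith
  then have bound: "cmod (f x * cnj (g x)) \<le> (cmod (f x))\<^sup>2 + (cmod (g x))\<^sup>2" for x
    by (simp add: norm_mult)
  have "integrable M (\<lambda>x. (cmod (f x))\<^sup>2 + (cmod (g x))\<^sup>2)"
    using assms by (simp add: L2_integrable)
  then show ?thesis
    by (rule Bochner_Integration.integrable_bound) (auto intro!: AE_I2 order.trans[OF bound])
qed

lemma L2_sqnorm_nonneg: "0 \<le> L2_sqnorm M f"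
  by (simp add: L2_sqnorm_def)

lemma L2_sqnorm_nn_integral:
  "f \<in> L2 M \<Longrightarrow> ennreal (L2_sqnorm M f) = (\<integral>\<^sup>+x. ennreal ((cmod (f x))\<^sup>2) \<partial>M)"
  unfolding L2_sqnorm_def by (intro nn_integral_eq_integral[symmetric] L2_integrable) auto

lemma L2_sqnorm_cong_AE:
  assumes "f \<in> L2 M" "g \<in> L2 M" "AE x in M. f x = g x"
  shows "L2_sqnorm M f = L2_sqnorm M g"
  unfolding L2_sqnorm_def
  using assms by (intro integral_cong_AE) (auto intro: borel_measurable_integrable L2_integrable)

lemma L2_sqnorm_eq_0_iff:
  assumes "f \<in> L2 M"
  shows "L2_sqnorm M f = 0 \<longleftrightarrow> (AE x in M. f x = 0)"
proof -
  have "L2_sqnorm M f = 0 \<longleftrightarrow> (AE x in M. (cmod (f x))\<^sup>2 = 0)"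
    unfolding L2_sqnorm_def using L2_integrable[OF assms] by (intro integral_nonneg_eq_0_iff_AE) auto
  then show ?thesis
    by simp
qed

lemma L2_sqnorm_diff_commute: "L2_sqnorm M (\<lambda>x. f x - g x) = L2_sqnorm M (\<lambda>x. g x - f x)"
  by (simp add: L2_sqnorm_def norm_minus_commute)

lemma L2_sqnorm_scale: "L2_sqnorm M (\<lambda>x. c * f x) = (cmod c)\<^sup>2 * L2_sqnorm M f"
  by (simp add: L2_sqnorm_def norm_mult power_mult_distrib)

lemma L2_inner_self: "L2_inner M f f = complex_of_real (L2_sqnorm M f)"
proof -
  have "f x * cnj (f x) = complex_of_real ((cmod (f x))\<^sup>2)" for x
    by (simp only: complex_mult_cnj cmod_power2)
  then show ?thesis
    by (simp only: L2_inner_def L2_sqnorm_def integral_complex_of_real)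
qed

lemma L2_inner_diff_left:
  assumes "f \<in> L2 M" "g \<in> L2 M" "h \<in> L2 M"
  shows "L2_inner M (\<lambda>x. f x - g x) h = L2_inner M f h - L2_inner M g h"
  unfolding L2_inner_def left_diff_distrib
  by (intro Bochner_Integration.integral_diff L2_inner_integrable assms)

lemma L2_inner_add_left:
  assumes "f \<in> L2 M" "g \<in> L2 M" "h \<in> L2 M"
  shows "L2_inner M (\<lambda>x. f x + g x) h = L2_inner M f h + L2_inner M g h"
  unfolding L2_inner_def distrib_right
  by (intro Bochner_Integration.integral_add L2_inner_integrable assms)

lemma L2_inner_scale_left: "L2_inner M (\<lambda>x. c * f x) h = c * L2_inner M f h"
  by (simp add: L2_inner_def mult.assoc)

lemma L2_inner_cong_AE_right:
  assumes "f \<in> L2 M" "g \<in> L2 M" "g' \<in> L2 M" "AE x in M. g x = g' x"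
  shows "L2_inner M f g = L2_inner M f g'"
  unfolding L2_inner_def
  using assms(4) L2_inner_integrable[OF assms(1,2)] L2_inner_integrable[OF assms(1,3)]
  by (intro integral_cong_AE) auto

lemma L2_sqnorm_add:
  assumes "f \<in> L2 M" "g \<in> L2 M"
  shows "L2_sqnorm M (\<lambda>x. f x + g x) = L2_sqnorm M f + L2_sqnorm M g + 2 * Re (L2_inner M f g)"
proof -
  have expand: "(cmod (u + v))\<^sup>2 = (cmod u)\<^sup>2 + (cmod v)\<^sup>2 + 2 * Re (u * cnj v)" for u v
    unfolding cmod_power2 by (simp add: power2_eq_square algebra_simps)
  have fg: "integrable M (\<lambda>x. (cmod (f x))\<^sup>2)" "integrable M (\<lambda>x. (cmod (g x))\<^sup>2)"
    using assms by (simp_all add: L2_integrable)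
  have mixed: "integrable M (\<lambda>x. 2 * Re (f x * cnj (g x)))"
    by (intro integrable_mult_right integrable_Re L2_inner_integrable assms)
  have "L2_sqnorm M (\<lambda>x. f x + g x)
      = (LINT x|M. (cmod (f x))\<^sup>2 + (cmod (g x))\<^sup>2 + 2 * Re (f x * cnj (g x)))"
    by (simp add: L2_sqnorm_def expand)
  also have "\<dots> = L2_sqnorm M f + L2_sqnorm M g + (LINT x|M. 2 * Re (f x * cnj (g x)))"
    using fg mixed by (simp add: L2_sqnorm_def)
  also have "(LINT x|M. 2 * Re (f x * cnj (g x))) = 2 * Re (L2_inner M f g)"
    unfolding L2_inner_def using L2_inner_integrable[OF assms]
    by (simp only: integral_mult_right_zero integral_Re)
  finally show ?thesis .
qed

lemma L2_parallelogram:
  assumes "f \<in> L2 M" "g \<in> L2 M"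
  shows "L2_sqnorm M (\<lambda>x. f x + g x) + L2_sqnorm M (\<lambda>x. f x - g x)
    = 2 * L2_sqnorm M f + 2 * L2_sqnorm M g"
proof -
  have "L2_sqnorm M (\<lambda>x. f x - g x) = L2_sqnorm M (\<lambda>x. f x + (- 1) * g x)"
    by simp
  also have "\<dots> = L2_sqnorm M f + L2_sqnorm M g - 2 * Re (L2_inner M f g)"
    using L2_sqnorm_add[OF assms(1) L2_scale[OF assms(2)], of "- 1"]
    by (simp add: L2_sqnorm_def L2_inner_def)
  finally show ?thesis
    using L2_sqnorm_add[OF assms] by simp
qed

lemma L2_Cauchy_Schwarz:
  assumes "f \<in> L2 M" "g \<in> L2 M"
  shows "(cmod (L2_inner M f g))\<^sup>2 \<le> L2_sqnorm M f * L2_sqnorm M g"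
proof -
  have [measurable]: "f \<in> borel_measurable M" "g \<in> borel_measurable M"
    using assms by (simp_all add: L2_measurable)
  define C where "C = (LINT x|M. cmod (f x) * cmod (g x))"
  have "integrable M (\<lambda>x. cmod (f x) * cmod (g x))"
    using integrable_norm[OF L2_inner_integrable[OF assms]] by (simp add: norm_mult)
  then have "ennreal C = (\<integral>\<^sup>+x. ennreal (cmod (f x) * cmod (g x)) \<partial>M)"
    unfolding C_def by (intro nn_integral_eq_integral[symmetric]) auto
  also have "\<dots> = (\<integral>\<^sup>+x. ennreal (cmod (f x)) * ennreal (cmod (g x)) \<partial>M)"
    by (simp add: ennreal_mult)
  finally have "ennreal C = \<dots>" .
  moreover have "(\<integral>\<^sup>+x. ennreal (cmod (f x)) ^ 2 \<partial>M) = ennreal (L2_sqnorm M f)"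
    "(\<integral>\<^sup>+x. ennreal (cmod (g x)) ^ 2 \<partial>M) = ennreal (L2_sqnorm M g)"
    using assms by (simp_all add: L2_sqnorm_nn_integral ennreal_power)
  ultimately have "ennreal C ^ 2 \<le> ennreal (L2_sqnorm M f) * ennreal (L2_sqnorm M g)"
    using Cauchy_Schwarz_nn_integral[of "\<lambda>x. ennreal (cmod (f x))" M "\<lambda>x. ennreal (cmod (g x))"]
    by simp
  moreover have "0 \<le> C"
    by (simp add: C_def)
  ultimately have "ennreal (C\<^sup>2) \<le> ennreal (L2_sqnorm M f * L2_sqnorm M g)"
    by (simp only: ennreal_power ennreal_mult L2_sqnorm_nonneg)
  then have "C\<^sup>2 \<le> L2_sqnorm M f * L2_sqnorm M g"
    by (rule ennreal_le_iff[THEN iffD1, rotated]) (simp add: L2_sqnorm_nonneg)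
  moreover have "cmod (L2_inner M f g) \<le> C"
    unfolding L2_inner_def C_def
    using integral_norm_bound[of M "\<lambda>x. f x * cnj (g x)"] by (simp add: norm_mult)
  ultimately show ?thesis
    by (meson norm_ge_zero order_trans power_mono)
qed

lemma L2_dist_triangle:
  assumes "f \<in> L2 M" "g \<in> L2 M" "h \<in> L2 M"
  shows "sqrt (L2_sqnorm M (\<lambda>x. f x - h x))
    \<le> sqrt (L2_sqnorm M (\<lambda>x. f x - g x)) + sqrt (L2_sqnorm M (\<lambda>x. g x - h x))"
proof -
  define u v where "u = (\<lambda>x. f x - g x)" and "v = (\<lambda>x. g x - h x)"
  have uv: "u \<in> L2 M" "v \<in> L2 M"
    unfolding u_def v_def using assms by (simp_all add: L2_diff)
  have "Re (L2_inner M u v) \<le> sqrt (L2_sqnorm M u) * sqrt (L2_sqnorm M v)"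
    using complex_Re_le_cmod[of "L2_inner M u v"] real_le_rsqrt[OF L2_Cauchy_Schwarz[OF uv]]
    by (simp add: real_sqrt_mult)
  then have "L2_sqnorm M (\<lambda>x. u x + v x) \<le> (sqrt (L2_sqnorm M u) + sqrt (L2_sqnorm M v))\<^sup>2"
    by (simp add: L2_sqnorm_add[OF uv] power2_sum L2_sqnorm_nonneg)
  moreover have "(\<lambda>x. u x + v x) = (\<lambda>x. f x - h x)"
    by (simp add: u_def v_def)
  ultimately show ?thesis
    unfolding u_def v_def by (intro real_le_lsqrt) (auto simp: L2_sqnorm_nonneg)
qed

section \<open>Completeness of \<open>L\<^sup>2\<close>\<close>

lemma convergent_if_summable_weighted_sq_diff:
  fixes z :: "nat \<Rightarrow> complex"
  assumes "summable (\<lambda>j. 2 ^ j * (cmod (z (Suc j) - z j))\<^sup>2)"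
  shows "convergent z"
proof -
  have AM_GM: "c \<le> p * c\<^sup>2 + 1 / p" if "0 < p" "0 \<le> c" for p c :: real
  proof -
    have "2 * p * c \<le> p\<^sup>2 * c\<^sup>2 + 1"
      using zero_le_power2[of "p * c - 1"] by (simp add: power2_diff power_mult_distrib)
    then have "2 * c \<le> p * c\<^sup>2 + 1 / p"
      using that(1) by (simp add: field_simps power2_eq_square)
    then show ?thesis
      using that(2) by linarith
  qed
  have "summable (\<lambda>j. 1 / (2::real) ^ j)"
    using summable_geometric[of "1 / 2 :: real"] by (simp add: power_one_over)
  then have "summable (\<lambda>j. 2 ^ j * (cmod (z (Suc j) - z j))\<^sup>2 + 1 / 2 ^ j)"
    by (rule summable_add[OF assms])
  moreover have "norm (cmod (z (Suc j) - z j)) \<le> 2 ^ j * (cmod (z (Suc j) - z j))\<^sup>2 + 1 / 2 ^ j" for j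
    using AM_GM[of "2 ^ j" "cmod (z (Suc j) - z j)"] by simp
  ultimately have "summable (\<lambda>j. cmod (z (Suc j) - z j))"
    by (rule summable_comparison_test'[of _ 0])
  then have "summable (\<lambda>j. z (Suc j) - z j)"
    by (rule summable_norm_cancel)
  then have "(\<lambda>n. z 0 + (\<Sum>j<n. z (Suc j) - z j)) \<longlonglongrightarrow> z 0 + (\<Sum>j. z (Suc j) - z j)"
    by (intro tendsto_add tendsto_const summable_LIMSEQ)
  then show ?thesis
    unfolding sum_lessThan_telescope convergent_def by auto
qed

lemma L2_AE_summable_weighted_sq:
  assumes d: "\<And>j. d j \<in> L2 M" and small: "\<And>j. L2_sqnorm M (d j) \<le> (1 / 8) ^ j"
  shows "AE x in M. summable (\<lambda>j. 2 ^ j * (cmod (d j x))\<^sup>2)"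
proof -
  have [measurable]: "d j \<in> borel_measurable M" for j
    using d by (rule L2_measurable)
  define q where "q x = (\<Sum>j. ennreal (2 ^ j * (cmod (d j x))\<^sup>2))" for x
  have "(\<integral>\<^sup>+x. q x \<partial>M) = (\<Sum>j. \<integral>\<^sup>+x. ennreal (2 ^ j * (cmod (d j x))\<^sup>2) \<partial>M)"
    unfolding q_def by (rule nn_integral_suminf) measurable
  also have "\<dots> = (\<Sum>j. ennreal (2 ^ j * L2_sqnorm M (d j)))"
  proof (intro arg_cong[where f = suminf] ext)
    fix j
    have "integrable M (\<lambda>x. 2 ^ j * (cmod (d j x))\<^sup>2)"
      using L2_integrable[OF d] by (rule integrable_mult_right)
    then show "(\<integral>\<^sup>+x. ennreal (2 ^ j * (cmod (d j x))\<^sup>2) \<partial>M) = ennreal (2 ^ j * L2_sqnorm M (d j))"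
      unfolding L2_sqnorm_def by (subst nn_integral_eq_integral) auto
  qed
  also have "\<dots> \<le> (\<Sum>j. ennreal ((1 / 4) ^ j))"
  proof (intro suminf_le allI ennreal_leI)
    fix j :: nat
    have "2 ^ j * L2_sqnorm M (d j) \<le> 2 ^ j * (1 / 8) ^ j"
      using small[of j] by (intro mult_left_mono) auto
    also have "\<dots> = (1 / 4) ^ j"
      by (simp add: power_mult_distrib[symmetric])
    finally show "2 ^ j * L2_sqnorm M (d j) \<le> (1 / 4) ^ j" .
  qed auto
  also have "\<dots> = ennreal (\<Sum>j. (1 / 4) ^ j)"
    by (rule suminf_ennreal2) auto
  finally have "(\<integral>\<^sup>+x. q x \<partial>M) < \<infinity>"
    by (rule order.strict_trans1) simp
  moreover have "q \<in> borel_measurable M"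
    unfolding q_def by measurable
  ultimately have "AE x in M. q x < \<infinity>"
    by (intro finite_nn_integral_imp_ae_finite)
  then show ?thesis
    by eventually_elim (simp add: q_def summable_suminf_not_top)
qed

lemma L2_fast_Cauchy_AE_convergent:
  assumes s: "\<And>j. s j \<in> L2 M"
    and fast: "\<And>j. L2_sqnorm M (\<lambda>x. s (Suc j) x - s j x) \<le> (1 / 8) ^ j"
  shows "AE x in M. convergent (\<lambda>n. s n x)"
proof -
  have "AE x in M. summable (\<lambda>j. 2 ^ j * (cmod (s (Suc j) x - s j x))\<^sup>2)"
    using s fast by (intro L2_AE_summable_weighted_sq L2_diff)
  then show ?thesis
    by eventually_elim (rule convergent_if_summable_weighted_sq_diff)
qed

lemma L2_sqnorm_diff_limit_le:
  assumes f: "f \<in> L2 M" and s: "\<And>n. s n \<in> L2 M" and [measurable]: "h \<in> borel_measurable M"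
    and lim: "AE x in M. (\<lambda>n. s n x) \<longlonglongrightarrow> h x"
    and bound: "eventually (\<lambda>n. L2_sqnorm M (\<lambda>x. f x - s n x) \<le> e) sequentially"
  shows "(\<lambda>x. f x - h x) \<in> L2 M" and "L2_sqnorm M (\<lambda>x. f x - h x) \<le> e"
proof -
  have [measurable]: "f \<in> borel_measurable M" "s n \<in> borel_measurable M" for n
    using f s by (simp_all add: L2_measurable)
  have "(\<integral>\<^sup>+x. ennreal ((cmod (f x - h x))\<^sup>2) \<partial>M)
      = (\<integral>\<^sup>+x. liminf (\<lambda>n. ennreal ((cmod (f x - s n x))\<^sup>2)) \<partial>M)"
    using lim
    by (intro nn_integral_cong_AE, eventually_elim)
      (intro lim_imp_Liminf[symmetric] tendsto_intros, auto)
  also have "\<dots> \<le> liminf (\<lambda>n. \<integral>\<^sup>+x. ennreal ((cmod (f x - s n x))\<^sup>2) \<partial>M)"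
    by (rule nn_integral_liminf) measurable
  also have "\<dots> = liminf (\<lambda>n. ennreal (L2_sqnorm M (\<lambda>x. f x - s n x)))"
    by (simp add: L2_sqnorm_nn_integral L2_diff f s)
  also have "\<dots> \<le> liminf (\<lambda>n. ennreal e)"
    using bound by (intro Liminf_mono) (auto elim: eventually_mono intro: ennreal_leI)
  also have "\<dots> = ennreal e"
    by (simp add: Liminf_const)
  finally have nn_bound: "(\<integral>\<^sup>+x. ennreal ((cmod (f x - h x))\<^sup>2) \<partial>M) \<le> ennreal e" .
  then have "integrable M (\<lambda>x. (cmod (f x - h x))\<^sup>2)"
    using order.strict_trans1[OF nn_bound] by (intro integrableI_bounded) simp_all
  then show L2: "(\<lambda>x. f x - h x) \<in> L2 M"
    by (simp add: L2_def)
  obtain n where "L2_sqnorm M (\<lambda>x. f x - s n x) \<le> e"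
    using bound by (auto simp: eventually_sequentially)
  then have "0 \<le> e"
    by (meson L2_sqnorm_nonneg order_trans)
  moreover have "ennreal (L2_sqnorm M (\<lambda>x. f x - h x)) \<le> ennreal e"
    using nn_bound by (simp only: L2_sqnorm_nn_integral[OF L2])
  ultimately show "L2_sqnorm M (\<lambda>x. f x - h x) \<le> e"
    by (simp add: ennreal_le_iff)
qed

lemma fast_Cauchy_subseq:
  fixes d :: "nat \<Rightarrow> nat \<Rightarrow> real" and \<epsilon> :: "nat \<Rightarrow> real"
  assumes Cauchy: "\<And>e. 0 < e \<Longrightarrow> \<exists>K. \<forall>m\<ge>K. \<forall>n\<ge>K. d m n < e" and \<epsilon>: "\<And>n. 0 < \<epsilon> n"
  obtains r where "strict_mono r" "\<And>n i j. r n \<le> i \<Longrightarrow> r n \<le> j \<Longrightarrow> d i j < \<epsilon> n"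
proof -
  have "\<exists>r. \<forall>n. (\<forall>i\<ge>r n. \<forall>j\<ge>r n. d i j < \<epsilon> n) \<and> r n < r (Suc n)"
  proof (rule dependent_nat_choice)
    fix k n :: nat
    obtain K where "\<forall>i\<ge>K. \<forall>j\<ge>K. d i j < \<epsilon> (Suc n)"
      using Cauchy[OF \<epsilon>] by blast
    then show "\<exists>r. (\<forall>i\<ge>r. \<forall>j\<ge>r. d i j < \<epsilon> (Suc n)) \<and> k < r"
      by (intro exI[of _ "max K (Suc k)"]) auto
  qed (use Cauchy[OF \<epsilon>] in blast)
  then obtain r where "\<And>n i j. r n \<le> i \<Longrightarrow> r n \<le> j \<Longrightarrow> d i j < \<epsilon> n" "\<And>n. r n < r (Suc n)"
    by blast
  then show ?thesis
    by (intro that[of r]) (auto simp: strict_mono_Suc_iff)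
qed

lemma L2_complete:
  assumes s: "\<And>n. s n \<in> L2 M"
    and Cauchy: "\<And>e. 0 < e \<Longrightarrow> \<exists>K. \<forall>m\<ge>K. \<forall>n\<ge>K. L2_sqnorm M (\<lambda>x. s m x - s n x) < e"
  shows "\<exists>h\<in>L2 M. (\<lambda>n. L2_sqnorm M (\<lambda>x. s n x - h x)) \<longlonglongrightarrow> 0"
proof -
  obtain r where r: "strict_mono r"
    "\<And>n i j. r n \<le> i \<Longrightarrow> r n \<le> j \<Longrightarrow> L2_sqnorm M (\<lambda>x. s i x - s j x) < (1 / 8) ^ n"
    using fast_Cauchy_subseq[OF Cauchy, of "\<lambda>n. (1 / 8) ^ n"] by auto
  then have "AE x in M. convergent (\<lambda>n. s (r n) x)"
    by (intro L2_fast_Cauchy_AE_convergent s less_imp_le) (simp add: strict_mono_less_eq)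
  define h where "h x = lim (\<lambda>n. s (r n) x)" for x
  have h_measurable [measurable]: "h \<in> borel_measurable M"
    unfolding h_def using s by (measurable, auto intro: L2_measurable)
  have lim: "AE x in M. (\<lambda>n. s (r n) x) \<longlonglongrightarrow> h x"
    using \<open>AE x in M. convergent _\<close> by eventually_elim (simp add: h_def convergent_LIMSEQ_iff)
  have close: "\<exists>K. \<forall>m\<ge>K. (\<lambda>x. s m x - h x) \<in> L2 M \<and> L2_sqnorm M (\<lambda>x. s m x - h x) \<le> e"
    if e: "0 < e" for e
  proof -
    obtain K where K: "\<forall>i\<ge>K. \<forall>j\<ge>K. L2_sqnorm M (\<lambda>x. s i x - s j x) < e"
      using Cauchy[OF e] by blast
    have "eventually (\<lambda>n. L2_sqnorm M (\<lambda>x. s m x - s (r n) x) \<le> e) sequentially" if "K \<le> m" for m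
      using K that seq_suble[OF r(1)] by (intro eventually_sequentiallyI[of K]) (meson le_trans less_imp_le)
    then show ?thesis
      using L2_sqnorm_diff_limit_le[OF s s, OF h_measurable lim] by blast
  qed
  then obtain K1 where "(\<lambda>x. s K1 x - h x) \<in> L2 M"
    using zero_less_one by blast
  from L2_diff[OF s[of K1] this] have "h \<in> L2 M"
    by simp
  moreover have "(\<lambda>n. L2_sqnorm M (\<lambda>x. s n x - h x)) \<longlonglongrightarrow> 0"
  proof (rule LIMSEQ_I)
    fix e :: real
    assume "0 < e"
    then obtain K where "\<forall>n\<ge>K. L2_sqnorm M (\<lambda>x. s n x - h x) \<le> e / 2"
      using close[of "e / 2"] by auto
    then show "\<exists>K. \<forall>n\<ge>K. norm (L2_sqnorm M (\<lambda>x. s n x - h x) - 0) < e"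
      using \<open>0 < e\<close> by (intro exI[of _ K]) (fastforce simp: L2_sqnorm_nonneg)
  qed
  ultimately show ?thesis
    by auto
qed

section \<open>Best approximation from a closed subspace\<close>

definition L2_closure :: "'x measure \<Rightarrow> ('x \<Rightarrow> complex) set \<Rightarrow> ('x \<Rightarrow> complex) set" where
  "L2_closure M W = {h \<in> L2 M. \<forall>e>0. \<exists>w\<in>W. L2_sqnorm M (\<lambda>x. h x - w x) < e}"

definition L2_subspace :: "'x measure \<Rightarrow> ('x \<Rightarrow> complex) set \<Rightarrow> bool" where
  "L2_subspace M W \<longleftrightarrow> W \<subseteq> L2 M \<and> (\<lambda>x. 0) \<in> W \<and>
     (\<forall>w1\<in>W. \<forall>w2\<in>W. \<forall>c d. (\<lambda>x. c * w1 x + d * w2 x) \<in> W)"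

lemma L2_closure_L2: "h \<in> L2_closure M W \<Longrightarrow> h \<in> L2 M"
  by (simp add: L2_closure_def)

lemma L2_closure_superset: "W \<subseteq> L2 M \<Longrightarrow> W \<subseteq> L2_closure M W"
  by (force simp: L2_closure_def L2_sqnorm_def)

lemma L2_closure_cong_AE:
  assumes "h \<in> L2_closure M W" "W \<subseteq> L2 M" "h' \<in> L2 M" "AE x in M. h x = h' x"
  shows "h' \<in> L2_closure M W"
  unfolding L2_closure_def
proof (intro CollectI conjI allI impI assms(3))
  fix e :: real
  assume "0 < e"
  then obtain w where w: "w \<in> W" "L2_sqnorm M (\<lambda>x. h x - w x) < e"
    using assms(1) by (auto simp: L2_closure_def)
  have "h \<in> L2 M" "w \<in> L2 M"
    using assms(1,2) w(1) by (auto simp: L2_closure_L2)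
  moreover have "AE x in M. h' x - w x = h x - w x"
    using assms(4) by auto
  ultimately have "L2_sqnorm M (\<lambda>x. h' x - w x) = L2_sqnorm M (\<lambda>x. h x - w x)"
    using assms(3) by (intro L2_sqnorm_cong_AE L2_diff)
  with w show "\<exists>w\<in>W. L2_sqnorm M (\<lambda>x. h' x - w x) < e"
    by (intro bexI[of _ w]) auto
qed

lemma L2_closure_lincomb:
  assumes W: "L2_subspace M W" and h: "h1 \<in> L2_closure M W" "h2 \<in> L2_closure M W"
  shows "(\<lambda>x. c * h1 x + d * h2 x) \<in> L2_closure M W"
  unfolding L2_closure_def
proof (intro CollectI conjI allI impI)
  show "(\<lambda>x. c * h1 x + d * h2 x) \<in> L2 M"
    using h by (intro L2_lincomb L2_closure_L2)
  fix e :: real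
  assume "0 < e"
  define S where "S = (cmod c)\<^sup>2 + (cmod d)\<^sup>2 + 1"
  define t where "t = e / (4 * S)"
  have "0 < S"
    by (simp add: S_def add_nonneg_pos)
  then have "0 < t"
    using \<open>0 < e\<close> by (simp add: t_def)
  then obtain w1 w2 where w: "w1 \<in> W" "L2_sqnorm M (\<lambda>x. h1 x - w1 x) < t"
    "w2 \<in> W" "L2_sqnorm M (\<lambda>x. h2 x - w2 x) < t"
    using h unfolding L2_closure_def by blast
  define u v where "u = (\<lambda>x. c * (h1 x - w1 x))" and "v = (\<lambda>x. d * (h2 x - w2 x))"
  have "h1 \<in> L2 M" "h2 \<in> L2 M" "w1 \<in> L2 M" "w2 \<in> L2 M"
    using h w W by (auto simp: L2_closure_L2 L2_subspace_def)
  then have uv: "u \<in> L2 M" "v \<in> L2 M"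
    unfolding u_def v_def by (simp_all add: L2_scale L2_diff)
  have "L2_sqnorm M (\<lambda>x. u x + v x) \<le> 2 * L2_sqnorm M u + 2 * L2_sqnorm M v"
    using L2_parallelogram[OF uv] L2_sqnorm_nonneg[of M "\<lambda>x. u x - v x"] by linarith
  also have "\<dots> \<le> 2 * ((cmod c)\<^sup>2 * t) + 2 * ((cmod d)\<^sup>2 * t)"
    unfolding u_def v_def L2_sqnorm_scale using w by (intro add_mono mult_left_mono) auto
  also have "\<dots> \<le> 2 * (S * t)"
    using \<open>0 < t\<close> by (simp add: S_def algebra_simps)
  also have "\<dots> < e"
    using \<open>0 < e\<close> \<open>0 < S\<close> by (simp add: t_def)
  finally have "L2_sqnorm M (\<lambda>x. (c * h1 x + d * h2 x) - (c * w1 x + d * w2 x)) < e"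
    by (simp add: u_def v_def algebra_simps)
  moreover have "(\<lambda>x. c * w1 x + d * w2 x) \<in> W"
    using W w by (simp add: L2_subspace_def)
  ultimately show "\<exists>w\<in>W. L2_sqnorm M (\<lambda>x. (c * h1 x + d * h2 x) - w x) < e"
    by (intro bexI[of _ "\<lambda>x. c * w1 x + d * w2 x"])
qed

lemma L2_closure_orthogonal:
  assumes W: "W \<subseteq> L2 M" and v: "v \<in> L2 M" and orth: "\<And>w. w \<in> W \<Longrightarrow> L2_inner M w v = 0"
    and h: "h \<in> L2_closure M W"
  shows "L2_inner M h v = 0"
proof -
  have bound: "(cmod (L2_inner M h v))\<^sup>2 \<le> t * L2_sqnorm M v" if "0 < t" for t
  proof -
    obtain w where w: "w \<in> W" "L2_sqnorm M (\<lambda>x. h x - w x) < t"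
      using h \<open>0 < t\<close> by (auto simp: L2_closure_def)
    have hw: "h \<in> L2 M" "w \<in> L2 M"
      using h w W by (auto simp: L2_closure_L2)
    have "L2_inner M h v = L2_inner M (\<lambda>x. h x - w x) v"
      using L2_inner_diff_left[OF hw v] orth[OF w(1)] by simp
    then have "(cmod (L2_inner M h v))\<^sup>2 \<le> L2_sqnorm M (\<lambda>x. h x - w x) * L2_sqnorm M v"
      using L2_Cauchy_Schwarz[OF L2_diff[OF hw] v] by simp
    also have "\<dots> \<le> t * L2_sqnorm M v"
      using w(2) by (intro mult_right_mono) (auto simp: L2_sqnorm_nonneg)
    finally show ?thesis .
  qed
  have "(cmod (L2_inner M h v))\<^sup>2 \<le> 0 + e" if "0 < e" for e
  proof -
    have "0 < L2_sqnorm M v + 1"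
      by (simp add: add_nonneg_pos L2_sqnorm_nonneg)
    then have "e / (L2_sqnorm M v + 1) * L2_sqnorm M v \<le> e / (L2_sqnorm M v + 1) * (L2_sqnorm M v + 1)"
      using \<open>0 < e\<close> by (intro mult_left_mono) auto
    then have "e / (L2_sqnorm M v + 1) * L2_sqnorm M v \<le> e"
      using \<open>0 < L2_sqnorm M v + 1\<close> by simp
    then show ?thesis
      using bound[of "e / (L2_sqnorm M v + 1)"] \<open>0 < e\<close> by (simp add: add_nonneg_pos L2_sqnorm_nonneg)
  qed
  then have "(cmod (L2_inner M h v))\<^sup>2 \<le> 0"
    by (rule field_le_epsilon)
  then show ?thesis
    by simp
qed

lemma L2_closure_dist_lower_bound:
  assumes g: "g \<in> L2 M" and W: "W \<subseteq> L2 M" and lower: "\<And>w. w \<in> W \<Longrightarrow> d \<le> L2_sqnorm M (\<lambda>x. g x - w x)"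
    and h: "h \<in> L2_closure M W"
  shows "d \<le> L2_sqnorm M (\<lambda>x. g x - h x)"
proof (rule ccontr)
  assume "\<not> ?thesis"
  then have "sqrt (L2_sqnorm M (\<lambda>x. g x - h x)) < sqrt d"
    by simp
  define \<delta> where "\<delta> = sqrt d - sqrt (L2_sqnorm M (\<lambda>x. g x - h x))"
  have "0 < \<delta>"
    using \<open>sqrt _ < sqrt d\<close> by (simp add: \<delta>_def)
  then have "0 < \<delta>\<^sup>2"
    by simp
  then obtain w where w: "w \<in> W" "L2_sqnorm M (\<lambda>x. h x - w x) < \<delta>\<^sup>2"
    using h unfolding L2_closure_def by blast
  have "sqrt (L2_sqnorm M (\<lambda>x. g x - w x))
      \<le> sqrt (L2_sqnorm M (\<lambda>x. g x - h x)) + sqrt (L2_sqnorm M (\<lambda>x. h x - w x))"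
    using g h w W by (intro L2_dist_triangle) (auto simp: L2_closure_L2)
  also have "sqrt (L2_sqnorm M (\<lambda>x. h x - w x)) < \<delta>"
    using w(2) \<open>0 < \<delta>\<close> by (intro real_less_lsqrt) auto
  finally have "sqrt (L2_sqnorm M (\<lambda>x. g x - w x)) < sqrt d"
    by (simp add: \<delta>_def)
  with lower[OF w(1)] show False
    by simp
qed

lemma L2_Apollonius:
  assumes "g \<in> L2 M" "u \<in> L2 M" "v \<in> L2 M"
  shows "L2_sqnorm M (\<lambda>x. u x - v x) = 2 * L2_sqnorm M (\<lambda>x. g x - u x) + 2 * L2_sqnorm M (\<lambda>x. g x - v x)
    - 4 * L2_sqnorm M (\<lambda>x. g x - (1 / 2 * u x + 1 / 2 * v x))"
proof -
  have "(\<lambda>x. (g x - u x) + (g x - v x)) = (\<lambda>x. 2 * (g x - (1 / 2 * u x + 1 / 2 * v x)))"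
    by (auto simp: algebra_simps)
  then have "L2_sqnorm M (\<lambda>x. (g x - u x) + (g x - v x))
      = 4 * L2_sqnorm M (\<lambda>x. g x - (1 / 2 * u x + 1 / 2 * v x))"
    by (simp only: L2_sqnorm_scale) simp
  moreover have "L2_sqnorm M (\<lambda>x. (g x - u x) - (g x - v x)) = L2_sqnorm M (\<lambda>x. u x - v x)"
    using L2_sqnorm_diff_commute[of M v u] by simp
  ultimately show ?thesis
    using L2_parallelogram[of "\<lambda>x. g x - u x" M "\<lambda>x. g x - v x"] assms by (simp add: L2_diff)
qed

lemma L2_minimizing_sequence_convergent:
  assumes g: "g \<in> L2 M" and W: "W \<subseteq> L2 M"
    and midpoint: "\<And>u v. u \<in> W \<Longrightarrow> v \<in> W \<Longrightarrow> (\<lambda>x. 1 / 2 * u x + 1 / 2 * v x) \<in> W"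
    and lower: "\<And>w. w \<in> W \<Longrightarrow> d \<le> L2_sqnorm M (\<lambda>x. g x - w x)"
    and w: "\<And>n. w n \<in> W" "\<And>n. L2_sqnorm M (\<lambda>x. g x - w n x) \<le> d + inverse (Suc n)"
  shows "\<exists>b\<in>L2 M. (\<lambda>n. L2_sqnorm M (\<lambda>x. w n x - b x)) \<longlonglongrightarrow> 0"
proof (rule L2_complete)
  show wL2: "w n \<in> L2 M" for n
    using w W by auto
  fix e :: real
  assume "0 < e"
  then obtain K where K: "inverse (real (Suc K)) < e / 4"
    using reals_Archimedean[of "e / 4"] by auto
  have "L2_sqnorm M (\<lambda>x. w m x - w n x) < e" if "K \<le> m" "K \<le> n" for m n
  proof -
    have "L2_sqnorm M (\<lambda>x. w m x - w n x) \<le> 2 * inverse (Suc m) + 2 * inverse (Suc n)"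
      using L2_Apollonius[OF g wL2 wL2, of m n] w(2)[of m] w(2)[of n]
        lower[OF midpoint[OF w(1)[of m] w(1)[of n]]]
      by linarith
    also have "\<dots> \<le> 4 * inverse (Suc K)"
    proof -
      have "inverse (real (Suc m)) \<le> inverse (Suc K)" "inverse (real (Suc n)) \<le> inverse (Suc K)"
        using that by (auto intro!: le_imp_inverse_le)
      then show ?thesis
        by linarith
    qed
    finally show ?thesis
      using K by simp
  qed
  then show "\<exists>K. \<forall>m\<ge>K. \<forall>n\<ge>K. L2_sqnorm M (\<lambda>x. w m x - w n x) < e"
    by blast
qed

lemma L2_closure_limit:
  assumes "\<And>n. w n \<in> W" "b \<in> L2 M" "(\<lambda>n. L2_sqnorm M (\<lambda>x. w n x - b x)) \<longlonglongrightarrow> 0"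
  shows "b \<in> L2_closure M W"
  unfolding L2_closure_def
proof (intro CollectI conjI allI impI assms(2))
  fix e :: real
  assume "0 < e"
  then obtain n where "norm (L2_sqnorm M (\<lambda>x. w n x - b x) - 0) < e"
    using LIMSEQ_D[OF assms(3)] by blast
  then have "L2_sqnorm M (\<lambda>x. b x - w n x) < e"
    by (simp add: L2_sqnorm_diff_commute[of M b])
  then show "\<exists>w\<in>W. L2_sqnorm M (\<lambda>x. b x - w x) < e"
    using assms(1) by blast
qed

lemma L2_sqnorm_diff_tendsto:
  assumes g: "g \<in> L2 M" and b: "b \<in> L2 M" and w: "\<And>n. w n \<in> L2 M"
    and lim: "(\<lambda>n. L2_sqnorm M (\<lambda>x. w n x - b x)) \<longlonglongrightarrow> 0"
  shows "(\<lambda>n. L2_sqnorm M (\<lambda>x. g x - w n x)) \<longlonglongrightarrow> L2_sqnorm M (\<lambda>x. g x - b x)"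
proof -
  have bound: "norm (sqrt (L2_sqnorm M (\<lambda>x. g x - w n x)) - sqrt (L2_sqnorm M (\<lambda>x. g x - b x)))
      \<le> sqrt (L2_sqnorm M (\<lambda>x. w n x - b x))" for n
    using L2_dist_triangle[OF g w b, of n] L2_dist_triangle[OF g b w, of n]
      arg_cong[where f = sqrt, OF L2_sqnorm_diff_commute[of M b "w n"]]
    unfolding real_norm_def abs_le_iff by (intro conjI) linarith+
  have "(\<lambda>n. sqrt (L2_sqnorm M (\<lambda>x. w n x - b x))) \<longlonglongrightarrow> 0"
    using tendsto_real_sqrt[OF lim] by simp
  with always_eventually[OF allI[OF bound]]
  have "(\<lambda>n. sqrt (L2_sqnorm M (\<lambda>x. g x - w n x)) - sqrt (L2_sqnorm M (\<lambda>x. g x - b x))) \<longlonglongrightarrow> 0"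
    by (rule Lim_null_comparison)
  then have "(\<lambda>n. (sqrt (L2_sqnorm M (\<lambda>x. g x - w n x)))\<^sup>2) \<longlonglongrightarrow> (sqrt (L2_sqnorm M (\<lambda>x. g x - b x)))\<^sup>2"
    by (rule tendsto_power[OF LIM_zero_cancel])
  then show ?thesis
    by (simp only: real_sqrt_pow2 L2_sqnorm_nonneg)
qed

lemma L2_best_approximation:
  assumes W: "L2_subspace M W" and g: "g \<in> L2 M"
  shows "\<exists>b\<in>L2_closure M W. \<forall>c\<in>L2_closure M W. L2_sqnorm M (\<lambda>x. g x - b x) \<le> L2_sqnorm M (\<lambda>x. g x - c x)"
proof -
  have W_L2: "W \<subseteq> L2 M" and "(\<lambda>x. 0) \<in> W"
    and midpoint: "\<And>u v. u \<in> W \<Longrightarrow> v \<in> W \<Longrightarrow> (\<lambda>x. 1 / 2 * u x + 1 / 2 * v x) \<in> W"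
    using W unfolding L2_subspace_def by blast+
  define d where "d = (INF w\<in>W. L2_sqnorm M (\<lambda>x. g x - w x))"
  have bdd: "bdd_below ((\<lambda>w. L2_sqnorm M (\<lambda>x. g x - w x)) ` W)"
    by (intro bdd_belowI2[of _ 0]) (simp add: L2_sqnorm_nonneg)
  then have lower: "d \<le> L2_sqnorm M (\<lambda>x. g x - w x)" if "w \<in> W" for w
    unfolding d_def using that by (rule cINF_lower)
  have "\<exists>w\<in>W. L2_sqnorm M (\<lambda>x. g x - w x) < d + inverse (Suc n)" for n
    using cINF_less_iff[OF _ bdd, of "d + inverse (Suc n)"] \<open>(\<lambda>x. 0) \<in> W\<close> unfolding d_def by auto
  then obtain w where w: "\<And>n. w n \<in> W" "\<And>n. L2_sqnorm M (\<lambda>x. g x - w n x) \<le> d + inverse (Suc n)"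
    by (metis less_imp_le)
  then obtain b where b: "b \<in> L2 M" and lim: "(\<lambda>n. L2_sqnorm M (\<lambda>x. w n x - b x)) \<longlonglongrightarrow> 0"
    using L2_minimizing_sequence_convergent[OF g W_L2 midpoint lower] by blast
  have "(\<lambda>n. L2_sqnorm M (\<lambda>x. g x - w n x)) \<longlonglongrightarrow> L2_sqnorm M (\<lambda>x. g x - b x)"
    using w(1) W_L2 by (intro L2_sqnorm_diff_tendsto[OF g b _ lim]) blast
  moreover have "(\<lambda>n. d + inverse (real (Suc n))) \<longlonglongrightarrow> d + 0"
    by (intro tendsto_intros LIMSEQ_inverse_real_of_nat)
  ultimately have "L2_sqnorm M (\<lambda>x. g x - b x) \<le> d"
    using w(2) by (intro LIMSEQ_le) auto
  moreover have "b \<in> L2_closure M W"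
    using w(1) b lim by (rule L2_closure_limit)
  ultimately show ?thesis
    using L2_closure_dist_lower_bound[OF g W_L2 lower] by (meson order_trans)
qed

section \<open>Bounded operators and commutants\<close>

lemma bounded_op_L2: "bounded_op M R \<Longrightarrow> f \<in> L2 M \<Longrightarrow> R f \<in> L2 M"
  by (simp add: bounded_op_def)

lemma bounded_op_cong_AE:
  "bounded_op M R \<Longrightarrow> f \<in> L2 M \<Longrightarrow> g \<in> L2 M \<Longrightarrow> AE x in M. f x = g x \<Longrightarrow> AE x in M. R f x = R g x"
  by (simp add: bounded_op_def)

lemma bounded_op_lincomb:
  "bounded_op M R \<Longrightarrow> f \<in> L2 M \<Longrightarrow> g \<in> L2 M \<Longrightarrow>
    AE x in M. R (\<lambda>y. c * f y + d * g y) x = c * R f x + d * R g x"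
  by (simp add: bounded_op_def)

lemma bounded_op_add:
  "bounded_op M R \<Longrightarrow> f \<in> L2 M \<Longrightarrow> g \<in> L2 M \<Longrightarrow> AE x in M. R (\<lambda>y. f y + g y) x = R f x + R g x"
  using bounded_op_lincomb[of M R f g 1 1] by simp

lemma bounded_op_diff:
  "bounded_op M R \<Longrightarrow> f \<in> L2 M \<Longrightarrow> g \<in> L2 M \<Longrightarrow> AE x in M. R (\<lambda>y. f y - g y) x = R f x - R g x"
  using bounded_op_lincomb[of M R f g 1 "- 1"] by simp

lemma bounded_op_scale:
  "bounded_op M R \<Longrightarrow> f \<in> L2 M \<Longrightarrow> AE x in M. R (\<lambda>y. c * f y) x = c * R f x"
  using bounded_op_lincomb[of M R f f c 0] by simp

lemma bounded_op_zero: "bounded_op M R \<Longrightarrow> AE x in M. R (\<lambda>y. 0) x = 0"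
  using bounded_op_lincomb[OF _ L2_zero L2_zero, of M R 0 0] by simp

lemma bounded_op_sqnorm_Lipschitz:
  assumes R: "bounded_op M R"
  obtains C where "0 \<le> C" and "\<And>f g. f \<in> L2 M \<Longrightarrow> g \<in> L2 M \<Longrightarrow>
    L2_sqnorm M (\<lambda>x. R f x - R g x) \<le> C * L2_sqnorm M (\<lambda>x. f x - g x)"
proof -
  obtain C where C: "\<And>f. f \<in> L2 M \<Longrightarrow> L2_norm M (R f) \<le> C * L2_norm M f"
    using R unfolding bounded_op_def by blast
  have "L2_sqnorm M (\<lambda>x. R f x - R g x) \<le> C\<^sup>2 * L2_sqnorm M (\<lambda>x. f x - g x)"
    if fg: "f \<in> L2 M" "g \<in> L2 M" for f g
  proof -
    have "sqrt (L2_sqnorm M (R (\<lambda>y. f y - g y))) \<le> C * sqrt (L2_sqnorm M (\<lambda>x. f x - g x))"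
      using C[OF L2_diff[OF fg]] by (simp add: L2_norm_def L2_sqnorm_def)
    also have "\<dots> \<le> \<bar>C\<bar> * sqrt (L2_sqnorm M (\<lambda>x. f x - g x))"
      by (intro mult_right_mono) (auto simp: L2_sqnorm_nonneg)
    finally have "(sqrt (L2_sqnorm M (R (\<lambda>y. f y - g y))))\<^sup>2
        \<le> (\<bar>C\<bar> * sqrt (L2_sqnorm M (\<lambda>x. f x - g x)))\<^sup>2"
      by (rule power_mono) (simp add: L2_sqnorm_nonneg)
    then have "L2_sqnorm M (R (\<lambda>y. f y - g y)) \<le> C\<^sup>2 * L2_sqnorm M (\<lambda>x. f x - g x)"
      by (simp add: power_mult_distrib L2_sqnorm_nonneg)
    moreover have "L2_sqnorm M (\<lambda>x. R f x - R g x) = L2_sqnorm M (R (\<lambda>y. f y - g y))"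
      using bounded_op_diff[OF R fg] fg
      by (intro L2_sqnorm_cong_AE L2_diff bounded_op_L2[OF R]) auto
    ultimately show ?thesis
      by simp
  qed
  then show ?thesis
    using that[of "C\<^sup>2"] by simp
qed

lemma bounded_op_L2_closure:
  assumes R: "bounded_op M R" and W: "W \<subseteq> L2 M"
    and R_W: "\<And>w. w \<in> W \<Longrightarrow> \<exists>w'\<in>W. AE x in M. R w x = w' x"
    and h: "h \<in> L2_closure M W"
  shows "R h \<in> L2_closure M W"
  unfolding L2_closure_def
proof (intro CollectI conjI allI impI)
  have "h \<in> L2 M"
    using h by (rule L2_closure_L2)
  then show Rh: "R h \<in> L2 M"
    by (rule bounded_op_L2[OF R])
  obtain C where "0 \<le> C" and C: "\<And>f g. f \<in> L2 M \<Longrightarrow> g \<in> L2 M \<Longrightarrow>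
      L2_sqnorm M (\<lambda>x. R f x - R g x) \<le> C * L2_sqnorm M (\<lambda>x. f x - g x)"
    using bounded_op_sqnorm_Lipschitz[OF R] by blast
  fix e :: real
  assume "0 < e"
  then have "0 < e / (C + 1)"
    using \<open>0 \<le> C\<close> by simp
  then obtain w where w: "w \<in> W" "L2_sqnorm M (\<lambda>x. h x - w x) < e / (C + 1)"
    using h unfolding L2_closure_def by blast
  obtain w' where w': "w' \<in> W" "AE x in M. R w x = w' x"
    using R_W[OF w(1)] by blast
  have "L2_sqnorm M (\<lambda>x. R h x - w' x) = L2_sqnorm M (\<lambda>x. R h x - R w x)"
    using w w' W Rh bounded_op_L2[OF R] by (intro L2_sqnorm_cong_AE L2_diff) auto
  also have "\<dots> \<le> C * L2_sqnorm M (\<lambda>x. h x - w x)"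
    using w(1) W \<open>h \<in> L2 M\<close> by (intro C) auto
  also have "\<dots> \<le> C * (e / (C + 1))"
    using w(2) \<open>0 \<le> C\<close> by (intro mult_left_mono) auto
  also have "\<dots> < e"
    using \<open>0 \<le> C\<close> \<open>0 < e\<close> by (simp add: field_simps)
  finally show "\<exists>w\<in>W. L2_sqnorm M (\<lambda>x. R h x - w x) < e"
    using w'(1) by blast
qed

lemma commutant_bounded_op: "T \<in> commutant M S \<Longrightarrow> bounded_op M T"
  by (simp add: commutant_def)

lemma op_eq_sym: "op_eq M S T \<Longrightarrow> op_eq M T S"
  by (auto simp: op_eq_def elim: AE_mp)

lemma commutant_commutant_superset:
  assumes "S \<subseteq> {T. bounded_op M T}"
  shows "S \<subseteq> commutant M (commutant M S)"
  using assms by (auto simp: commutant_def intro: op_eq_sym)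

lemma factor_set_center_scalar:
  assumes "factor_set M S" "T \<in> commutant M S" "T \<in> commutant M (commutant M S)"
  shows "\<exists>c. op_eq M T (\<lambda>f x. c * f x)"
proof -
  have "commutant M S \<subseteq> {T. bounded_op M T}"
    by (auto simp: commutant_bounded_op)
  then have "T \<in> commutant M (commutant M (commutant M S))"
    using commutant_commutant_superset assms(2) by blast
  with assms show ?thesis
    by (auto simp: factor_set_def)
qed

section \<open>The quasi-regular representation of a measure-preserving action\<close>

locale measure_preserving_action = group G
  for G :: "('g, 'm) monoid_scheme" (structure) +
  fixes a :: "'g \<Rightarrow> 'x \<Rightarrow> 'x" and M :: "'x measure"
  assumes action_one: "a \<one> x = x"
    and action_mult: "g \<in> carrier G \<Longrightarrow> h \<in> carrier G \<Longrightarrow> a (g \<otimes> h) x = a g (a h x)"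
    and invariant: "invariant_measure G a M"
begin

abbreviation \<pi> :: "'g \<Rightarrow> ('x \<Rightarrow> complex) \<Rightarrow> 'x \<Rightarrow> complex" where
  "\<pi> \<equiv> quasi_regular G a"

lemma measurable_action: "k \<in> carrier G \<Longrightarrow> a k \<in> M \<rightarrow>\<^sub>M M"
  using invariant by (simp add: invariant_measure_def)

lemma distr_action: "k \<in> carrier G \<Longrightarrow> distr M M (a k) = M"
  using invariant by (simp add: invariant_measure_def)

lemma integral_quasi_regular:
  fixes h :: "'x \<Rightarrow> 'c::{banach, second_countable_topology}"
  assumes "k \<in> carrier G" "h \<in> borel_measurable M"
  shows "(LINT x|M. h (a (inv k) x)) = integral\<^sup>L M h"
  using integral_distr[OF measurable_action assms(2), of "inv k"] distr_action[of "inv k"] assms(1)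
  by simp

lemma quasi_regular_L2:
  assumes k: "k \<in> carrier G" and f: "f \<in> L2 M"
  shows "\<pi> k f \<in> L2 M"
proof -
  have [measurable]: "f \<in> borel_measurable M" "a (inv k) \<in> M \<rightarrow>\<^sub>M M"
    using f k by (simp_all add: L2_measurable measurable_action)
  have "integrable (distr M M (a (inv k))) (\<lambda>y. (cmod (f y))\<^sup>2)"
    using k f by (simp add: distr_action L2_integrable)
  then have "integrable M (\<lambda>x. (cmod (f (a (inv k) x)))\<^sup>2)"
    by (subst (asm) integrable_distr_eq) auto
  then show ?thesis
    by (simp add: L2_def quasi_regular_def)
qed

lemma quasi_regular_cong_AE:
  assumes k: "k \<in> carrier G" and "f \<in> L2 M" "g \<in> L2 M" "AE x in M. f x = g x"
  shows "AE x in M. \<pi> k f x = \<pi> k g x"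
proof -
  have [measurable]: "f \<in> borel_measurable M" "g \<in> borel_measurable M"
    using assms by (simp_all add: L2_measurable)
  have "AE y in distr M M (a (inv k)). f y = g y"
    unfolding distr_action[OF inv_closed[OF k]] by (rule assms(4))
  then show ?thesis
    unfolding quasi_regular_def using k by (subst (asm) AE_distr_iff) (auto simp: measurable_action)
qed

lemma quasi_regular_inner:
  assumes "k \<in> carrier G" "f \<in> L2 M" "g \<in> L2 M"
  shows "L2_inner M (\<pi> k f) (\<pi> k g) = L2_inner M f g"
  unfolding L2_inner_def quasi_regular_def
  using integral_quasi_regular[OF assms(1) borel_measurable_integrable[OF L2_inner_integrable[OF assms(2,3)]]]
  by simp

lemma quasi_regular_sqnorm:
  assumes "k \<in> carrier G" "f \<in> L2 M"
  shows "L2_sqnorm M (\<pi> k f) = L2_sqnorm M f"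
  unfolding L2_sqnorm_def quasi_regular_def
  using integral_quasi_regular[OF assms(1) borel_measurable_integrable[OF L2_integrable[OF assms(2)]]]
  by simp

lemma commutant_quasi_regular:
  "R \<in> commutant M (\<pi> ` carrier G) \<Longrightarrow> k \<in> carrier G \<Longrightarrow> f \<in> L2 M \<Longrightarrow>
    AE x in M. R (\<pi> k f) x = \<pi> k (R f) x"
  by (auto simp: commutant_def op_eq_def)

definition invariant_vectors :: "('x \<Rightarrow> complex) set" where
  "invariant_vectors = {v \<in> L2 M. \<forall>k\<in>carrier G. AE x in M. \<pi> k v x = v x}"

text \<open>The closure of this span is the orthogonal complement of \<open>invariant_vectors\<close>.\<close>

inductive_set coinvariant_span :: "('x \<Rightarrow> complex) set" where
  zero: "(\<lambda>x. 0) \<in> coinvariant_span"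
| generator: "f \<in> L2 M \<Longrightarrow> k \<in> carrier G \<Longrightarrow> (\<lambda>x. f x - \<pi> k f x) \<in> coinvariant_span"
| add: "w1 \<in> coinvariant_span \<Longrightarrow> w2 \<in> coinvariant_span \<Longrightarrow> (\<lambda>x. w1 x + w2 x) \<in> coinvariant_span"
| scale: "w \<in> coinvariant_span \<Longrightarrow> (\<lambda>x. c * w x) \<in> coinvariant_span"

lemma coinvariant_span_L2: "w \<in> coinvariant_span \<Longrightarrow> w \<in> L2 M"
  by (induction rule: coinvariant_span.induct)
    (auto intro: L2_zero L2_diff quasi_regular_L2 L2_add L2_scale)

lemma coinvariant_span_subspace: "L2_subspace M coinvariant_span"
  unfolding L2_subspace_def
  by (auto intro: coinvariant_span_L2 coinvariant_span.zero coinvariant_span.add coinvariant_span.scale)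

lemma invariant_vectors_L2: "v \<in> invariant_vectors \<Longrightarrow> v \<in> L2 M"
  by (simp add: invariant_vectors_def)

lemma invariant_vectors_lincomb:
  assumes "v1 \<in> invariant_vectors" "v2 \<in> invariant_vectors"
  shows "(\<lambda>x. c * v1 x + d * v2 x) \<in> invariant_vectors"
  unfolding invariant_vectors_def
proof (intro CollectI conjI ballI)
  show "(\<lambda>x. c * v1 x + d * v2 x) \<in> L2 M"
    using assms by (intro L2_lincomb invariant_vectors_L2)
  fix k
  assume "k \<in> carrier G"
  then have "AE x in M. \<pi> k v1 x = v1 x" "AE x in M. \<pi> k v2 x = v2 x"
    using assms by (auto simp: invariant_vectors_def)
  then show "AE x in M. \<pi> k (\<lambda>x. c * v1 x + d * v2 x) x = c * v1 x + d * v2 x"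
    by eventually_elim (simp add: quasi_regular_def)
qed

lemma invariant_vectors_cong_AE:
  assumes v: "v \<in> invariant_vectors" and "v' \<in> L2 M" "AE x in M. v x = v' x"
  shows "v' \<in> invariant_vectors"
  unfolding invariant_vectors_def
proof (intro CollectI conjI ballI assms(2))
  fix k
  assume k: "k \<in> carrier G"
  have "AE x in M. \<pi> k v' x = \<pi> k v x"
    using assms k by (intro quasi_regular_cong_AE) (auto simp: invariant_vectors_L2)
  moreover have "AE x in M. \<pi> k v x = v x"
    using v k by (auto simp: invariant_vectors_def)
  ultimately show "AE x in M. \<pi> k v' x = v' x"
    using assms(3) by eventually_elim simp
qed

lemma coinvariant_span_orthogonal:
  assumes "w \<in> coinvariant_span" "v \<in> invariant_vectors"
  shows "L2_inner M w v = 0"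
  using assms(1)
proof (induction rule: coinvariant_span.induct)
  case zero
  show ?case
    by (simp add: L2_inner_def)
next
  case (generator f k)
  have v: "v \<in> L2 M" and "AE x in M. v x = \<pi> k v x"
    using assms(2) generator by (auto simp: invariant_vectors_def)
  then have "L2_inner M (\<pi> k f) v = L2_inner M (\<pi> k f) (\<pi> k v)"
    using generator by (intro L2_inner_cong_AE_right quasi_regular_L2)
  also have "\<dots> = L2_inner M f v"
    by (rule quasi_regular_inner[OF generator(2,1) v])
  finally show ?case
    using L2_inner_diff_left[OF generator(1) quasi_regular_L2[OF generator(2,1)] v] by simp
next
  case (add w1 w2)
  then show ?case
    using assms(2) by (simp add: L2_inner_add_left coinvariant_span_L2 invariant_vectors_L2)
next
  case (scale w c)
  then show ?case
    by (simp add: L2_inner_scale_left)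
qed

definition coinvariant_proj :: "('x \<Rightarrow> complex) \<Rightarrow> 'x \<Rightarrow> complex" where
  "coinvariant_proj g = (SOME b. b \<in> L2_closure M coinvariant_span \<and>
     (\<forall>c\<in>L2_closure M coinvariant_span. L2_sqnorm M (\<lambda>x. g x - b x) \<le> L2_sqnorm M (\<lambda>x. g x - c x)))"

definition invariant_proj :: "('x \<Rightarrow> complex) \<Rightarrow> 'x \<Rightarrow> complex" where
  "invariant_proj g = (\<lambda>x. g x - coinvariant_proj g x)"

lemma coinvariant_proj_best:
  assumes "g \<in> L2 M"
  shows "coinvariant_proj g \<in> L2_closure M coinvariant_span"
    and "\<And>c. c \<in> L2_closure M coinvariant_span \<Longrightarrow>
      L2_sqnorm M (invariant_proj g) \<le> L2_sqnorm M (\<lambda>x. g x - c x)"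
  using someI_ex[OF L2_best_approximation[OF coinvariant_span_subspace assms, unfolded Bex_def]]
  unfolding coinvariant_proj_def[symmetric] invariant_proj_def by auto

lemma invariant_proj_L2: "g \<in> L2 M \<Longrightarrow> invariant_proj g \<in> L2 M"
  unfolding invariant_proj_def using L2_closure_L2[OF coinvariant_proj_best(1)] by (simp add: L2_diff)

lemma invariant_proj_invariant:
  assumes g: "g \<in> L2 M"
  shows "invariant_proj g \<in> invariant_vectors"
  unfolding invariant_vectors_def
proof (intro CollectI conjI ballI invariant_proj_L2 g)
  fix k
  assume k: "k \<in> carrier G"
  define u where "u = invariant_proj g"
  \<comment> \<open>Minimality of the residual \<open>u\<close> against the competitor with residual \<open>(u + \<pi> k u) / 2\<close>,
    together with the parallelogram law and \<open>norm (\<pi> k u) = norm u\<close>, forces \<open>u = \<pi> k u\<close>.\<close>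
  have u: "u \<in> L2 M" "\<pi> k u \<in> L2 M"
    unfolding u_def using g k by (simp_all add: invariant_proj_L2 quasi_regular_L2)
  have "(\<lambda>x. 1 * coinvariant_proj g x + 1 / 2 * (u x - \<pi> k u x)) \<in> L2_closure M coinvariant_span"
    using g u k coinvariant_span.generator coinvariant_span_L2
    by (intro L2_closure_lincomb coinvariant_span_subspace coinvariant_proj_best)
      (auto intro!: subsetD[OF L2_closure_superset])
  then have "L2_sqnorm M u \<le> L2_sqnorm M (\<lambda>x. g x - (1 * coinvariant_proj g x + 1 / 2 * (u x - \<pi> k u x)))"
    unfolding u_def by (rule coinvariant_proj_best(2)[OF g])
  also have "(\<lambda>x. g x - (1 * coinvariant_proj g x + 1 / 2 * (u x - \<pi> k u x))) = (\<lambda>x. 1 / 2 * (u x + \<pi> k u x))"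
    by (auto simp: u_def invariant_proj_def algebra_simps)
  also have "L2_sqnorm M \<dots> = 1 / 4 * L2_sqnorm M (\<lambda>x. u x + \<pi> k u x)"
    by (simp only: L2_sqnorm_scale) (simp add: power2_eq_square)
  finally have "L2_sqnorm M (\<lambda>x. u x - \<pi> k u x) \<le> 0"
    using L2_parallelogram[OF u] quasi_regular_sqnorm[OF k u(1)] by simp
  then have "AE x in M. u x - \<pi> k u x = 0"
    using L2_sqnorm_nonneg L2_sqnorm_eq_0_iff[OF L2_diff[OF u]] by (metis order_antisym)
  then show "AE x in M. \<pi> k (invariant_proj g) x = invariant_proj g x"
    unfolding u_def by auto
qed

lemma coinvariant_closure_orthogonal:
  "h \<in> L2_closure M coinvariant_span \<Longrightarrow> v \<in> invariant_vectors \<Longrightarrow> L2_inner M h v = 0"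
  by (rule L2_closure_orthogonal)
    (auto simp: coinvariant_span_orthogonal coinvariant_span_L2 invariant_vectors_L2)

lemma invariant_proj_unique:
  assumes g: "g \<in> L2 M" and v: "v \<in> invariant_vectors" and w: "w \<in> L2_closure M coinvariant_span"
    and decomp: "AE x in M. g x = v x + w x"
  shows "AE x in M. invariant_proj g x = v x"
proof -
  define z where "z = (\<lambda>x. invariant_proj g x - v x)"
  have "z \<in> invariant_vectors"
    using invariant_vectors_lincomb[OF invariant_proj_invariant[OF g] v, of 1 "- 1"] by (simp add: z_def)
  moreover have "z \<in> L2_closure M coinvariant_span"
  proof (rule L2_closure_cong_AE)
    show "(\<lambda>x. 1 * w x + (- 1) * coinvariant_proj g x) \<in> L2_closure M coinvariant_span"
      by (intro L2_closure_lincomb coinvariant_span_subspace w coinvariant_proj_best g)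
    show "AE x in M. 1 * w x + (- 1) * coinvariant_proj g x = z x"
      using decomp by eventually_elim (simp add: z_def invariant_proj_def)
    show "z \<in> L2 M"
      using \<open>z \<in> invariant_vectors\<close> by (rule invariant_vectors_L2)
  qed (auto simp: coinvariant_span_L2)
  ultimately have "L2_sqnorm M z = 0"
    using coinvariant_closure_orthogonal[of z z] by (simp add: L2_inner_self)
  then have "AE x in M. z x = 0"
    using L2_sqnorm_eq_0_iff invariant_vectors_L2[OF \<open>z \<in> invariant_vectors\<close>] by blast
  then show ?thesis
    by eventually_elim (simp add: z_def)
qed

lemma invariant_proj_fixes: "v \<in> invariant_vectors \<Longrightarrow> AE x in M. invariant_proj v x = v x"
  using coinvariant_span.zero L2_closure_superset[OF subsetI[OF coinvariant_span_L2]]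
  by (intro invariant_proj_unique[of v v "\<lambda>x. 0"]) (auto simp: invariant_vectors_L2)

lemma invariant_proj_bounded_op: "bounded_op M invariant_proj"
  unfolding bounded_op_def
proof (intro conjI ballI allI impI exI)
  fix f g
  assume f: "f \<in> L2 M" and g: "g \<in> L2 M"
  show "invariant_proj f \<in> L2 M"
    using f by (rule invariant_proj_L2)
  show "L2_norm M (invariant_proj f) \<le> 1 * L2_norm M f"
    using coinvariant_proj_best(2)[OF f, of "\<lambda>x. 0"] coinvariant_span.zero
      L2_closure_superset[OF subsetI[OF coinvariant_span_L2]]
    by (auto simp: L2_norm_def L2_sqnorm_def)
  show "AE x in M. invariant_proj f x = invariant_proj g x" if "AE x in M. f x = g x"
    using that
    by (intro invariant_proj_unique[OF f invariant_proj_invariant[OF g] coinvariant_proj_best(1)[OF g]])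
      (auto simp: invariant_proj_def)
  fix c d :: complex
  show "AE x in M. invariant_proj (\<lambda>y. c * f y + d * g y) x = c * invariant_proj f x + d * invariant_proj g x"
    using f g
    by (intro invariant_proj_unique[where w = "\<lambda>x. c * coinvariant_proj f x + d * coinvariant_proj g x"]
        L2_lincomb invariant_vectors_lincomb invariant_proj_invariant L2_closure_lincomb
        coinvariant_span_subspace coinvariant_proj_best(1) AE_I2)
      (simp_all add: invariant_proj_def algebra_simps)
qed

lemma invariant_proj_commutant: "invariant_proj \<in> commutant M (\<pi> ` carrier G)"
  unfolding commutant_def op_eq_def
proof (intro CollectI conjI invariant_proj_bounded_op ballI, clarsimp)
  fix k f
  assume k: "k \<in> carrier G" and f: "f \<in> L2 M"
  have "AE x in M. invariant_proj (\<pi> k f) x = invariant_proj f x"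
  proof (rule invariant_proj_unique[OF quasi_regular_L2[OF k f] invariant_proj_invariant[OF f]])
    show "(\<lambda>x. 1 * coinvariant_proj f x + (- 1) * (f x - \<pi> k f x)) \<in> L2_closure M coinvariant_span"
      using f k coinvariant_span.generator L2_closure_superset[OF subsetI[OF coinvariant_span_L2]]
      by (intro L2_closure_lincomb coinvariant_span_subspace coinvariant_proj_best(1)) auto
  qed (simp add: invariant_proj_def)
  moreover have "AE x in M. \<pi> k (invariant_proj f) x = invariant_proj f x"
    using invariant_proj_invariant[OF f] k by (simp add: invariant_vectors_def)
  ultimately show "AE x in M. invariant_proj (\<pi> k f) x = \<pi> k (invariant_proj f) x"
    by eventually_elim simp
qed

lemma commutant_coinvariant_span:
  assumes R: "R \<in> commutant M (\<pi> ` carrier G)" and w: "w \<in> coinvariant_span"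
  shows "\<exists>w'\<in>coinvariant_span. AE x in M. R w x = w' x"
  using w
proof (induction rule: coinvariant_span.induct)
  case zero
  show ?case
    using bounded_op_zero[OF commutant_bounded_op[OF R]] by (intro bexI[OF _ coinvariant_span.zero])
next
  case (generator f k)
  have "AE x in M. R (\<lambda>y. f y - \<pi> k f y) x = R f x - R (\<pi> k f) x"
    using generator by (intro bounded_op_diff commutant_bounded_op[OF R] quasi_regular_L2)
  then have "AE x in M. R (\<lambda>y. f y - \<pi> k f y) x = R f x - \<pi> k (R f) x"
    using commutant_quasi_regular[OF R generator(2,1)] by eventually_elim simp
  moreover have "R f \<in> L2 M"
    using generator(1) by (rule bounded_op_L2[OF commutant_bounded_op[OF R]])
  ultimately show ?case
    using generator(2) by (intro bexI[OF _ coinvariant_span.generator])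
next
  case (add w1 w2)
  then obtain w1' w2' where w': "w1' \<in> coinvariant_span" "w2' \<in> coinvariant_span"
    and ae: "AE x in M. R w1 x = w1' x" "AE x in M. R w2 x = w2' x"
    by blast
  have "AE x in M. R (\<lambda>y. w1 y + w2 y) x = R w1 x + R w2 x"
    using add by (intro bounded_op_add commutant_bounded_op[OF R] coinvariant_span_L2)
  then have "AE x in M. R (\<lambda>y. w1 y + w2 y) x = w1' x + w2' x"
    using ae by eventually_elim simp
  then show ?case
    using w' by (intro bexI[OF _ coinvariant_span.add])
next
  case (scale w c)
  then obtain w' where w': "w' \<in> coinvariant_span" and ae: "AE x in M. R w x = w' x"
    by blast
  have "AE x in M. R (\<lambda>y. c * w y) x = c * R w x"
    using scale by (intro bounded_op_scale commutant_bounded_op[OF R] coinvariant_span_L2)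
  then have "AE x in M. R (\<lambda>y. c * w y) x = c * w' x"
    using ae by eventually_elim simp
  then show ?case
    using w' by (intro bexI[OF _ coinvariant_span.scale])
qed

lemma commutant_invariant_vectors:
  assumes R: "R \<in> commutant M (\<pi> ` carrier G)" and v: "v \<in> invariant_vectors"
  shows "R v \<in> invariant_vectors"
  unfolding invariant_vectors_def
proof (intro CollectI conjI ballI)
  have "v \<in> L2 M"
    using v by (rule invariant_vectors_L2)
  then show "R v \<in> L2 M"
    by (rule bounded_op_L2[OF commutant_bounded_op[OF R]])
  fix k
  assume k: "k \<in> carrier G"
  have "AE x in M. R (\<pi> k v) x = R v x"
    using v k \<open>v \<in> L2 M\<close>
    by (intro bounded_op_cong_AE[OF commutant_bounded_op[OF R]] quasi_regular_L2)
      (auto simp: invariant_vectors_def)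
  with commutant_quasi_regular[OF R k \<open>v \<in> L2 M\<close>] show "AE x in M. \<pi> k (R v) x = R v x"
    by eventually_elim simp
qed

lemma invariant_proj_bicommutant: "invariant_proj \<in> commutant M (commutant M (\<pi> ` carrier G))"
  unfolding commutant_def[of M "commutant M _"] op_eq_def
proof (intro CollectI conjI invariant_proj_bounded_op ballI, simp)
  fix R f
  assume R: "R \<in> commutant M (\<pi> ` carrier G)" and f: "f \<in> L2 M"
  have R': "bounded_op M R"
    using R by (rule commutant_bounded_op)
  show "AE x in M. invariant_proj (R f) x = R (invariant_proj f) x"
  proof (rule invariant_proj_unique)
    show "R f \<in> L2 M" "R (invariant_proj f) \<in> invariant_vectors"
      using f R by (simp_all add: bounded_op_L2[OF R'] commutant_invariant_vectors invariant_proj_invariant)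
    show "R (coinvariant_proj f) \<in> L2_closure M coinvariant_span"
      using R f by (intro bounded_op_L2_closure[OF R'] coinvariant_proj_best(1))
        (auto simp: coinvariant_span_L2 commutant_coinvariant_span)
    have "(\<lambda>y. invariant_proj f y + coinvariant_proj f y) = f"
      by (simp add: invariant_proj_def)
    then show "AE x in M. R f x = R (invariant_proj f) x + R (coinvariant_proj f) x"
      using bounded_op_add[OF R' invariant_proj_L2[OF f] L2_closure_L2[OF coinvariant_proj_best(1)[OF f]]]
      by simp
  qed
qed

theorem factor_invariant_vectors_trivial_or_all:
  assumes "factor_set M (\<pi> ` carrier G)"
  shows "invariant_vectors = L2 M \<or> (\<forall>v\<in>invariant_vectors. AE x in M. v x = 0)"
proof -
  obtain c where c: "\<And>f. f \<in> L2 M \<Longrightarrow> AE x in M. invariant_proj f x = c * f x"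
    using factor_set_center_scalar[OF assms invariant_proj_commutant invariant_proj_bicommutant]
    by (auto simp: op_eq_def)
  show ?thesis
  proof (cases "c = 0")
    case True
    have "AE x in M. v x = 0" if "v \<in> invariant_vectors" for v
      using invariant_proj_fixes[OF that] c[OF invariant_vectors_L2[OF that]]
      by eventually_elim (simp add: True)
    then show ?thesis
      by blast
  next
    case False
    have "f \<in> invariant_vectors" if f: "f \<in> L2 M" for f
    proof (rule invariant_vectors_cong_AE[OF _ f])
      show "(\<lambda>x. 1 / c * invariant_proj f x + 0 * invariant_proj f x) \<in> invariant_vectors"
        by (intro invariant_vectors_lincomb invariant_proj_invariant f)
      show "AE x in M. 1 / c * invariant_proj f x + 0 * invariant_proj f x = f x"
        using c[OF f] by eventually_elim (simp add: False)
    qed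
    then show ?thesis
      using invariant_vectors_L2 by blast
  qed
qed

end

section \<open>Fixed points on the support\<close>

context measure_preserving_action
begin

lemma AE_invariant_if_all_invariant_vectors:
  assumes "invariant_vectors = L2 M" "k \<in> carrier G" "f \<in> L2 M"
  shows "AE y in M. f (a k y) = f y"
proof -
  have "AE y in M. \<pi> (inv k) f y = f y"
    using assms by (auto simp: invariant_vectors_def)
  then show ?thesis
    using assms(2) by (simp add: quasi_regular_def)
qed

lemma stable_set_null_if_no_invariant_vectors:
  assumes no_invariant: "\<forall>v\<in>invariant_vectors. AE x in M. v x = 0"
    and A: "A \<in> sets M" "emeasure M A < \<infinity>"
    and stable: "\<And>k x. k \<in> carrier G \<Longrightarrow> x \<in> A \<Longrightarrow> a k x \<in> A"
  shows "emeasure M A = 0"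
proof -
  have "\<pi> k (\<lambda>x. indicator A x :: complex) x = indicator A x" if k: "k \<in> carrier G" for k x
  proof -
    have "a k (a (inv k) x) = x"
      using action_mult[of k "inv k" x] action_one k by simp
    then have "a (inv k) x \<in> A \<longleftrightarrow> x \<in> A"
      using stable[of k "a (inv k) x"] stable[of "inv k" x] k by auto
    then show ?thesis
      by (simp add: quasi_regular_def indicator_def)
  qed
  then have "(\<lambda>x. indicator A x :: complex) \<in> invariant_vectors"
    using A by (simp add: invariant_vectors_def L2_indicator)
  then have "AE x in M. x \<notin> A"
    using no_invariant by (auto simp: indicator_eq_0_iff)
  then show ?thesis
    using AE_iff_null_sets[OF A(1)] by (simp add: null_sets_def)
qed

end

lemma msupp_open_nonnull: "x \<in> msupp M \<Longrightarrow> open U \<Longrightarrow> x \<in> U \<Longrightarrow> emeasure M U \<noteq> 0"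
  by (auto simp: msupp_def)

lemma continuous_map_action:
  assumes "continuous_action G T a" "k \<in> topspace T"
  shows "continuous_map euclidean euclidean (a k)"
proof -
  have "continuous_map euclidean (prod_topology T euclidean) (\<lambda>x. (k, x))"
    using assms(2) by (intro continuous_map_pairedI) (simp_all add: continuous_map_id[unfolded id_def])
  moreover have "continuous_map (prod_topology T euclidean) euclidean (\<lambda>p. a (fst p) (snd p))"
    using assms(1) by (simp add: continuous_action_def)
  ultimately have "continuous_map euclidean euclidean ((\<lambda>p. a (fst p) (snd p)) \<circ> (\<lambda>x. (k, x)))"
    by (rule continuous_map_compose)
  then show ?thesis
    by (simp add: o_def)
qed

lemma fixed_on_msupp_if_L2_invariant:
  fixes b :: "'x::t2_space \<Rightarrow> 'x"
  assumes b: "continuous_map euclidean euclidean b"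
    and lc: "locally_compact_space (euclidean :: 'x topology)"
    and M: "sets M = sets borel" "\<And>C. compact C \<Longrightarrow> emeasure M C < \<infinity>"
    and invariant: "\<And>f. f \<in> L2 M \<Longrightarrow> AE y in M. f (b y) = f y"
    and x: "x \<in> msupp M"
  shows "b x = x"
proof (rule ccontr)
  assume "b x \<noteq> x"
  then obtain U V where UV: "open U" "open V" "x \<in> U" "b x \<in> V" "U \<inter> V = {}"
    by (metis hausdorff)
  have "\<exists>U0 N. open U0 \<and> compact N \<and> x \<in> U0 \<and> U0 \<subseteq> N"
    using lc by (simp add: locally_compact_space_def)
  then obtain U0 N where U0: "open U0" "compact N" "x \<in> U0" "U0 \<subseteq> N"
    by blast
  define U' where "U' = U \<inter> U0 \<inter> b -` V"
  have "open (b -` V)"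
    using openin_continuous_map_preimage[OF b, of V] UV(2) by (simp add: vimage_def)
  then have "open U'"
    unfolding U'_def using UV(1) U0(1) by auto
  moreover have "x \<in> U'"
    unfolding U'_def using UV U0 by auto
  ultimately have "emeasure M U' \<noteq> 0"
    using x by (rule msupp_open_nonnull[rotated])
  have "U' \<in> sets M" "N \<in> sets M"
    using \<open>open U'\<close> U0(2) M(1) by (auto intro: borel_closed compact_imp_closed)
  then have "emeasure M U' \<le> emeasure M N"
    using U0(4) by (intro emeasure_mono) (auto simp: U'_def)
  also have "\<dots> < \<infinity>"
    using U0(2) by (rule M(2))
  finally have "emeasure M U' < \<infinity>" .
  have escape: "b y \<notin> U'" if "y \<in> U'" for y
    using that UV(5) by (auto simp: U'_def)
  have "AE y in M. indicator U' (b y) = (indicator U' y :: complex)"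
    using \<open>U' \<in> sets M\<close> \<open>emeasure M U' < \<infinity>\<close> by (intro invariant L2_indicator)
  then have "AE y in M. y \<notin> U'"
    by eventually_elim (use escape in \<open>auto simp: indicator_def\<close>)
  then have "emeasure M U' = 0"
    using AE_iff_null_sets[OF \<open>U' \<in> sets M\<close>] by (simp add: null_sets_def)
  with \<open>emeasure M U' \<noteq> 0\<close> show False
    by contradiction
qed

lemma compact_action_image:
  assumes "continuous_action G T a" "compact_space T" "compact N"
  shows "compact ((\<lambda>p. a (fst p) (snd p)) ` (topspace T \<times> N))"
proof -
  have "compactin (prod_topology T euclidean) (topspace T \<times> N)"
    using assms(2,3) by (simp add: compactin_Times compact_space_def)
  then show ?thesis
    using image_compactin assms(1) by (fastforce simp: continuous_action_def)
qed

lemma msupp_empty_if_stable_compacts_null: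
  fixes a :: "'g \<Rightarrow> 'x::t2_space \<Rightarrow> 'x"
  assumes G: "group G" "topspace T = carrier G" "compact_space T" and action: "continuous_action G T a"
    and lc: "locally_compact_space (euclidean :: 'x topology)" and M: "sets M = sets borel"
    and null: "\<And>A. compact A \<Longrightarrow> (\<And>k x. k \<in> carrier G \<Longrightarrow> x \<in> A \<Longrightarrow> a k x \<in> A) \<Longrightarrow> emeasure M A = 0"
  shows "msupp M = {}"
proof (rule equals0I)
  fix x
  assume x: "x \<in> msupp M"
  have "\<exists>U N. open U \<and> compact N \<and> x \<in> U \<and> U \<subseteq> N"
    using lc by (simp add: locally_compact_space_def)
  then obtain U N where U: "open U" "compact N" "x \<in> U" "U \<subseteq> N"
    by blast
  define E where "E = (\<lambda>p. a (fst p) (snd p)) ` (carrier G \<times> N)"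
  have "compact E"
    unfolding E_def G(2)[symmetric] using action G(3) U(2) by (rule compact_action_image)
  moreover have "a k y \<in> E" if "k \<in> carrier G" "y \<in> E" for k y
  proof -
    obtain j z where "j \<in> carrier G" "z \<in> N" "y = a j z"
      using \<open>y \<in> E\<close> by (auto simp: E_def)
    then show ?thesis
      using that action G(1) unfolding E_def continuous_action_def
      by (auto intro!: image_eqI[of _ _ "(k \<otimes>\<^bsub>G\<^esub> j, z)"] group.is_monoid monoid.m_closed)
  qed
  ultimately have "emeasure M E = 0"
    by (rule null)
  moreover have "U \<subseteq> E"
    using U(4) action G(1) unfolding E_def continuous_action_def
    by (force intro!: image_eqI[of _ _ "(\<one>\<^bsub>G\<^esub>, _)"] monoid.one_closed group.is_monoid)
  moreover have "E \<in> sets M"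
    using borel_closed[OF compact_imp_closed[OF \<open>compact E\<close>]] M by simp
  ultimately have "emeasure M U = 0"
    using emeasure_mono[of U E M] by simp
  with msupp_open_nonnull[OF x U(1,3)] show False
    by contradiction
qed

theorem lemma2p8:
  fixes G :: "('k, 'm) monoid_scheme" and T :: "'k topology"
    and a :: "'k \<Rightarrow> 'x::t2_space \<Rightarrow> 'x" and M :: "'x measure"
  assumes "topological_group G T" and "compact_space T" and "Hausdorff_space T"
    and "locally_compact_space (euclidean :: 'x topology)"
    and "continuous_action G T a"
    and "radon_measure M" and "emeasure M (space M) \<noteq> 0"
    and "invariant_measure G a M"
    and "factor_representation G M (quasi_regular G a)"
  shows "\<forall>k\<in>carrier G. \<forall>x\<in>msupp M. a k x = x"
proof -
  have G: "group G" "topspace T = carrier G"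
    using assms(1) by (simp_all add: topological_group_def)
  have M: "sets M = sets borel" "\<And>C. compact C \<Longrightarrow> emeasure M C < \<infinity>"
    using assms(6) by (simp_all add: radon_measure_def)
  interpret measure_preserving_action G a M
    using G(1) assms(5,8)
    by (simp add: measure_preserving_action_def measure_preserving_action_axioms_def continuous_action_def)
  have "invariant_vectors = L2 M \<or> (\<forall>v\<in>invariant_vectors. AE x in M. v x = 0)"
    using assms(9) by (intro factor_invariant_vectors_trivial_or_all) (simp add: factor_representation_def)
  then show ?thesis
  proof
    assume "invariant_vectors = L2 M"
    then show ?thesis
      using fixed_on_msupp_if_L2_invariant[OF continuous_map_action[OF assms(5)] assms(4) M] G(2)
        AE_invariant_if_all_invariant_vectors
      by blast
  next
    assume "\<forall>v\<in>invariant_vectors. AE x in M. v x = 0"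
    then have "emeasure M A = 0"
      if "compact A" "\<And>k x. k \<in> carrier G \<Longrightarrow> x \<in> A \<Longrightarrow> a k x \<in> A" for A
      using that M borel_closed[OF compact_imp_closed[OF that(1)]]
      by (intro stable_set_null_if_no_invariant_vectors) auto
    then have "msupp M = {}"
      by (rule msupp_empty_if_stable_compacts_null[OF G assms(2,5,4) M(1)])
    then show ?thesis
      by simp
  qed
qed

end
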